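(* $a_{\{0101,0112,0120\}}(1)=1$, and for all $n\ge2$, $$a_{\{0101,0112,0120\}}(n)=\frac{1}{24}\left(n^4-6n^3+47n^2-114n+120\right).$$
   Context: An ascent in an integer sequence $s_1\cdots s_m$ is an index $j$ with $s_j<s_{j+1}$; $\mathrm{asc}$ denotes the number of ascents. An ascent sequence is a sequence $x_1\cdots x_n$ of nonnegative integers with $x_1=0$ and $x_i\le 1+\mathrm{asc}(x_1\cdots x_{i-1})$ for all $i\ge2$. The reduction $\mathrm{red}(w)$ of an integer sequence $w$ replaces the $i$-th smallest distinct letter of $w$ by $i-1$; a pattern is a reduced sequence. A sequence $x$ contains a pattern $p=p_1\cdots p_k$ if there are indices $i_1<\cdots<i_k$ with $\mathrm{red}(x_{i_1}\cdots x_{i_k})=p$; otherwise $x$ avoids $p$. For a finite set $P$ of patterns, $a_P(n)$ denotes the number of ascent sequences of length $n$ avoiding every pattern in $P$. *)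

theory Defs
  imports Complex_Main
begin

definition asc :: "nat list \<Rightarrow> nat" where
  "asc s = card {j. Suc j < length s \<and> s ! j < s ! Suc j}"

definition is_ascent_seq :: "nat list \<Rightarrow> bool" where
  "is_ascent_seq x \<longleftrightarrow> x \<noteq> [] \<and> x ! 0 = 0 \<and>
     (\<forall>i. 1 \<le> i \<and> i < length x \<longrightarrow> x ! i \<le> 1 + asc (take i x))"

definition red :: "nat list \<Rightarrow> nat list" where
  "red w = map (\<lambda>a. card {b \<in> set w. b < a}) w"

definition contains_pat :: "nat list \<Rightarrow> nat list \<Rightarrow> bool" where
  "contains_pat x p \<longleftrightarrow> (\<exists>I. I \<subseteq> {..<length x} \<and> red (nths x I) = p)"

definition avoids :: "nat list \<Rightarrow> nat list \<Rightarrow> bool" where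
  "avoids x p \<longleftrightarrow> \<not> contains_pat x p"

definition a_P :: "nat list set \<Rightarrow> nat \<Rightarrow> nat" where
  "a_P P n = card {x. is_ascent_seq x \<and> length x = n \<and> (\<forall>p\<in>P. avoids x p)}"

end

theory Submission
  imports Defs "HOL-Library.Sublist"
begin

text \<open>Avoiders are built letter by letter, and whether a letter \<open>v\<close> may be appended to a
  nonempty prefix \<open>x\<close> depends only on a few statistics of \<open>x\<close>: its number of ascents, the
  letters \<open>b\<close> with a subsequence \<open>a b a\<close> (\<open>a < b\<close>; appending \<open>b\<close> creates 0101), the
  letters \<open>c\<close> with a subsequence \<open>a c c\<close> (\<open>a < c\<close>; appending a letter above \<open>c\<close> creates
  0112) and the letters \<open>a\<close> with a subsequence \<open>a b c\<close> (\<open>a < b < c\<close>; appending \<open>a\<close> creates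
  0120). Every avoider on the letters \<open>0..k\<close> has the ascents, ascending pairs and 0120-statistic
  of \<open>0 1 \<dots> k\<close>, so only \<open>k - 1\<close>, \<open>k\<close> and \<open>k + 1\<close> can follow it, and the other two
  statistics take one of seven forms. These forms, together with the counter \<open>k\<close>, are the
  states of an automaton whose paths of length \<open>m\<close> are counted by simple recurrences with
  polynomial solutions; adding them up gives the quartic.\<close>

lemma red_less_iff:
  assumes "i < length s" "j < length s"
  shows "red s ! i < red s ! j \<longleftrightarrow> s ! i < s ! j"
proof -
  have mono: "card {b \<in> set s. b < u} < card {b \<in> set s. b < w}"
    if "u \<in> set s" "u < w" for u w
    by (rule psubset_card_mono) (use that in auto)
  show ?thesis
    using assms mono[of "s ! i" "s ! j"] mono[of "s ! j" "s ! i"]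
    by (cases "s ! i" "s ! j" rule: linorder_cases) (auto simp: red_def)
qed

lemma red_eq_iff:
  assumes "i < length s" "j < length s"
  shows "red s ! i = red s ! j \<longleftrightarrow> s ! i = s ! j"
  using red_less_iff[OF assms] red_less_iff[OF assms(2,1)] by (metis less_irrefl nat_neq_iff)

lemma red_pattern_order:
  assumes "red s = p" "i < length p" "j < length p"
  shows "s ! i < s ! j \<longleftrightarrow> p ! i < p ! j" and "s ! i = s ! j \<longleftrightarrow> p ! i = p ! j"
  using assms red_less_iff[of i s j] red_eq_iff[of i s j] by (auto simp: red_def)

lemma red_conv_filter: "red w = map (\<lambda>a. card (set (filter (\<lambda>b. b < a) w))) w"
  unfolding red_def by (metis set_filter)

lemma contains_pat_iff_subseq:
  "contains_pat x p \<longleftrightarrow> (\<exists>s. subseq s x \<and> red s = p)"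
proof -
  have "nths x N = nths x (N \<inter> {..<length x})" for N
    unfolding nths_def by (rule arg_cong[where f="map fst"], rule filter_cong) (auto simp: set_zip)
  then show ?thesis
    unfolding contains_pat_def subseq_conv_nths by (metis inf_le2)
qed

lemma contains_pat_length_4E:
  assumes "contains_pat x p" "length p = 4"
  obtains a b c d where "subseq [a, b, c, d] x" "red [a, b, c, d] = p"
proof -
  obtain s where "subseq s x" "red s = p"
    using assms(1) by (auto simp: contains_pat_iff_subseq)
  moreover have "length s = 4"
    using \<open>red s = p\<close> assms(2) by (auto simp: red_def)
  ultimately show ?thesis
    using that by (auto simp: numeral_eq_Suc length_Suc_conv)
qed

lemma contains_0101_iff:
  "contains_pat x [0,1,0,1] \<longleftrightarrow> (\<exists>a b. a < b \<and> subseq [a, b, a, b] x)"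
proof
  assume "contains_pat x [0,1,0,1]"
  then obtain a b c d where s: "subseq [a, b, c, d] x" and red: "red [a, b, c, d] = [0,1,0,1]"
    by (rule contains_pat_length_4E) simp
  have "a < b" "c = a" "d = b"
    using red_pattern_order[OF red, of 0 1] red_pattern_order[OF red, of 2 0]
      red_pattern_order[OF red, of 3 1] by simp_all
  with s show "\<exists>a b. a < b \<and> subseq [a, b, a, b] x"
    by blast
next
  assume "\<exists>a b. a < b \<and> subseq [a, b, a, b] x"
  then obtain a b where "a < b" "subseq [a, b, a, b] x"
    by blast
  moreover from \<open>a < b\<close> have "red [a, b, a, b] = [0,1,0,1]"
    by (simp add: red_conv_filter)
  ultimately show "contains_pat x [0,1,0,1]"
    by (auto simp: contains_pat_iff_subseq)
qed

lemma contains_0112_iff: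
  "contains_pat x [0,1,1,2] \<longleftrightarrow> (\<exists>a b c. a < b \<and> b < c \<and> subseq [a, b, b, c] x)"
proof
  assume "contains_pat x [0,1,1,2]"
  then obtain a b c d where s: "subseq [a, b, c, d] x" and red: "red [a, b, c, d] = [0,1,1,2]"
    by (rule contains_pat_length_4E) simp
  have "a < b" "c = b" "b < d"
    using red_pattern_order[OF red, of 0 1] red_pattern_order[OF red, of 2 1]
      red_pattern_order[OF red, of 1 3] by simp_all
  with s show "\<exists>a b c. a < b \<and> b < c \<and> subseq [a, b, b, c] x"
    by blast
next
  assume "\<exists>a b c. a < b \<and> b < c \<and> subseq [a, b, b, c] x"
  then obtain a b c where "a < b" "b < c" "subseq [a, b, b, c] x"
    by blast
  moreover from \<open>a < b\<close> \<open>b < c\<close> have "red [a, b, b, c] = [0,1,1,2]"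
    by (simp add: red_conv_filter)
  ultimately show "contains_pat x [0,1,1,2]"
    by (auto simp: contains_pat_iff_subseq)
qed

lemma contains_0120_iff:
  "contains_pat x [0,1,2,0] \<longleftrightarrow> (\<exists>a b c. a < b \<and> b < c \<and> subseq [a, b, c, a] x)"
proof
  assume "contains_pat x [0,1,2,0]"
  then obtain a b c d where s: "subseq [a, b, c, d] x" and red: "red [a, b, c, d] = [0,1,2,0]"
    by (rule contains_pat_length_4E) simp
  have "a < b" "b < c" "d = a"
    using red_pattern_order[OF red, of 0 1] red_pattern_order[OF red, of 1 2]
      red_pattern_order[OF red, of 3 0] by simp_all
  with s show "\<exists>a b c. a < b \<and> b < c \<and> subseq [a, b, c, a] x"
    by blast
next
  assume "\<exists>a b c. a < b \<and> b < c \<and> subseq [a, b, c, a] x"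
  then obtain a b c where "a < b" "b < c" "subseq [a, b, c, a] x"
    by blast
  moreover from \<open>a < b\<close> \<open>b < c\<close> have "red [a, b, c, a] = [0,1,2,0]"
    by (simp add: red_conv_filter card_insert_if)
  ultimately show "contains_pat x [0,1,2,0]"
    by (auto simp: contains_pat_iff_subseq)
qed

lemma subseq_snoc_iff:
  "subseq s (x @ [v]) \<longleftrightarrow> subseq s x \<or> (s \<noteq> [] \<and> last s = v \<and> subseq (butlast s) x)"
proof
  assume "subseq s (x @ [v])"
  then obtain s1 s2 where s: "s = s1 @ s2" "subseq s1 x" "subseq s2 [v]"
    by (rule subseq_appendE)
  moreover have "s2 = [] \<or> s2 = [v]"
    using s(3) by (cases s2) (auto split: if_splits)
  ultimately show "subseq s x \<or> (s \<noteq> [] \<and> last s = v \<and> subseq (butlast s) x)"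
    by auto
next
  assume "subseq s x \<or> (s \<noteq> [] \<and> last s = v \<and> subseq (butlast s) x)"
  then show "subseq s (x @ [v])"
    by (metis append_butlast_last_id subseq_append subseq_rev_drop_many)
qed

definition avoider :: "nat list \<Rightarrow> bool" where
  "avoider x \<longleftrightarrow> is_ascent_seq x \<and>
     avoids x [0,1,0,1] \<and> avoids x [0,1,1,2] \<and> avoids x [0,1,2,0]"

definition asc_pairs :: "nat list \<Rightarrow> (nat \<times> nat) set" where
  "asc_pairs x = {(a, b). a < b \<and> subseq [a, b] x}"

definition closers_0101 :: "nat list \<Rightarrow> nat set" where
  "closers_0101 x = {b. \<exists>a<b. subseq [a, b, a] x}"

definition doubled_tops :: "nat list \<Rightarrow> nat set" where
  "doubled_tops x = {c. \<exists>a<c. subseq [a, c, c] x}"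

definition closers_0120 :: "nat list \<Rightarrow> nat set" where
  "closers_0120 x = {a. \<exists>b c. a < b \<and> b < c \<and> subseq [a, b, c] x}"

lemma asc_snoc:
  assumes "x \<noteq> []"
  shows "asc (x @ [v]) = asc x + (if last x < v then 1 else 0)"
proof -
  let ?J = "{j. Suc j < length x \<and> x ! j < x ! Suc j}"
  have "{j. Suc j < length (x @ [v]) \<and> (x @ [v]) ! j < (x @ [v]) ! Suc j} =
      ?J \<union> (if last x < v then {length x - 1} else {})"
  proof (rule set_eqI)
    fix j
    show "j \<in> {j. Suc j < length (x @ [v]) \<and> (x @ [v]) ! j < (x @ [v]) ! Suc j} \<longleftrightarrow>
        j \<in> ?J \<union> (if last x < v then {length x - 1} else {})"
      using assms
      by (cases "j < length x - 1"; cases "j = length x - 1") (auto simp: nth_append last_conv_nth)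
  qed
  moreover have "finite ?J" "length x - 1 \<notin> ?J"
    by (auto intro: finite_subset[of _ "{..<length x}"])
  ultimately show ?thesis
    unfolding asc_def by simp
qed

lemma is_ascent_seq_snoc:
  assumes "x \<noteq> []"
  shows "is_ascent_seq (x @ [v]) \<longleftrightarrow> is_ascent_seq x \<and> v \<le> 1 + asc x"
proof -
  let ?bound = "\<lambda>y i. y ! i \<le> 1 + asc (take i y)"
  have "?bound (x @ [v]) i \<longleftrightarrow> ?bound x i" if "i < length x" for i
    using that by (simp add: nth_append)
  moreover have "?bound (x @ [v]) (length x) \<longleftrightarrow> v \<le> 1 + asc x"
    by simp
  moreover have "1 \<le> length x"
    using assms by (simp add: Suc_le_eq)
  ultimately have "(\<forall>i. 1 \<le> i \<and> i < length (x @ [v]) \<longrightarrow> ?bound (x @ [v]) i) \<longleftrightarrow>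
      (\<forall>i. 1 \<le> i \<and> i < length x \<longrightarrow> ?bound x i) \<and> v \<le> 1 + asc x"
    by (auto simp: less_Suc_eq)
  then show ?thesis
    using assms unfolding is_ascent_seq_def by (auto simp: nth_append)
qed

lemma contains_0101_snoc:
  "contains_pat (x @ [v]) [0,1,0,1] \<longleftrightarrow> contains_pat x [0,1,0,1] \<or> v \<in> closers_0101 x"
  unfolding contains_0101_iff closers_0101_def by (auto simp: subseq_snoc_iff)

lemma contains_0112_snoc:
  "contains_pat (x @ [v]) [0,1,1,2] \<longleftrightarrow> contains_pat x [0,1,1,2] \<or> (\<exists>c\<in>doubled_tops x. c < v)"
  unfolding contains_0112_iff doubled_tops_def by (auto simp: subseq_snoc_iff)

lemma contains_0120_snoc:
  "contains_pat (x @ [v]) [0,1,2,0] \<longleftrightarrow> contains_pat x [0,1,2,0] \<or> v \<in> closers_0120 x"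
  unfolding contains_0120_iff closers_0120_def by (auto simp: subseq_snoc_iff)

lemma avoider_snoc:
  assumes "x \<noteq> []"
  shows "avoider (x @ [v]) \<longleftrightarrow> avoider x \<and> v \<le> 1 + asc x \<and> v \<notin> closers_0101 x \<and>
    (\<forall>c\<in>doubled_tops x. v \<le> c) \<and> v \<notin> closers_0120 x"
  unfolding avoider_def avoids_def is_ascent_seq_snoc[OF assms]
    contains_0101_snoc contains_0112_snoc contains_0120_snoc
  by (auto simp: not_less)

lemma asc_pairs_snoc: "asc_pairs (x @ [v]) = asc_pairs x \<union> {(a, v) |a. a \<in> set x \<and> a < v}"
  unfolding asc_pairs_def by (auto simp: subseq_snoc_iff subseq_singleton_left)

lemma closers_0101_snoc: "closers_0101 (x @ [v]) = closers_0101 x \<union> {b. (v, b) \<in> asc_pairs x}"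
  unfolding asc_pairs_def closers_0101_def by (auto simp: subseq_snoc_iff)

lemma doubled_tops_snoc:
  "doubled_tops (x @ [v]) = doubled_tops x \<union> {c. c = v \<and> (\<exists>a. (a, v) \<in> asc_pairs x)}"
  unfolding asc_pairs_def doubled_tops_def by (auto simp: subseq_snoc_iff)

lemma closers_0120_snoc:
  "closers_0120 (x @ [v]) = closers_0120 x \<union> {a. \<exists>b. (a, b) \<in> asc_pairs x \<and> b < v}"
  unfolding asc_pairs_def closers_0120_def by (auto simp: subseq_snoc_iff)

definition staircase :: "nat \<Rightarrow> nat list \<Rightarrow> bool" where
  "staircase k x \<longleftrightarrow> set x = {0..k} \<and> asc x = k \<and>
     asc_pairs x = {(i, j). i < j \<and> j \<le> k} \<and> closers_0120 x = {i. i + 2 \<le> k}"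

lemma staircase_nonempty: "staircase k x \<Longrightarrow> x \<noteq> []"
  by (auto simp: staircase_def)

lemma staircase_last_le: "staircase k x \<Longrightarrow> last x \<le> k"
  using last_in_set[OF staircase_nonempty] by (fastforce simp: staircase_def)

lemma staircase_snoc_le:
  assumes "staircase k x" "v \<le> last x"
  shows "staircase k (x @ [v])"
  using assms staircase_last_le[OF assms(1)]
  by (auto simp: staircase_def asc_snoc[OF staircase_nonempty[OF assms(1)]]
      asc_pairs_snoc closers_0120_snoc)

lemma staircase_snoc_Suc:
  assumes "staircase k x"
  shows "staircase (Suc k) (x @ [Suc k])"
  using assms staircase_last_le[OF assms(1)]
  by (auto simp: staircase_def asc_snoc[OF staircase_nonempty[OF assms(1)]]
      asc_pairs_snoc closers_0120_snoc atLeast0_atMost_Suc)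

lemma staircase_closers_0101_snoc:
  "staircase k x \<Longrightarrow> closers_0101 (x @ [v]) = closers_0101 x \<union> {v<..k}"
  by (auto simp: staircase_def closers_0101_snoc)

lemma staircase_doubled_tops_snoc:
  "staircase k x \<Longrightarrow> doubled_tops (x @ [v]) = doubled_tops x \<union> {v} \<inter> {1..k}"
  by (auto simp: staircase_def doubled_tops_snoc) (rule exI[of _ 0], simp)

lemma staircase_avoider_snoc:
  assumes "staircase k x"
  shows "avoider (x @ [v]) \<longleftrightarrow> avoider x \<and> k \<le> Suc v \<and> v \<le> Suc k \<and>
    v \<notin> closers_0101 x \<and> (\<forall>c\<in>doubled_tops x. v \<le> c)"
  using assms by (auto simp: avoider_snoc[OF staircase_nonempty[OF assms]] staircase_def)

text \<open>The avoiders in each state, where \<open>u\<^sup>+\<close> is a nonempty run of \<open>u\<close> and \<open>k\<close> is the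
  largest letter: \<open>Zeros\<close> \<open>0\<^sup>+\<close>; \<open>Rise k\<close> \<open>0\<^sup>+ 1 2 \<dots> k\<close>; \<open>Dip\<close> \<open>0\<^sup>+ 1 0\<^sup>+\<close>;
  \<open>DipRise k\<close> \<open>0\<^sup>+ 1 0\<^sup>+ 2 \<dots> k\<close>; \<open>Plateau k\<close> and \<open>DipPlateau k\<close> a \<open>Rise k\<close> or
  \<open>DipRise k\<close> word followed by \<open>k\<^sup>+\<close>; \<open>Fall k\<close> a \<open>Rise k\<close> word with \<open>k \<ge> 2\<close>, a
  \<open>Plateau k\<close> word, or a \<open>DipRise k\<close> or \<open>DipPlateau k\<close> word with \<open>k \<ge> 3\<close>, followed by
  \<open>(k - 1)\<^sup>+\<close>.\<close>

datatype shape = Zeros | Rise | Plateau | Fall | Dip | DipRise | DipPlateau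

fun shape_stats :: "shape \<Rightarrow> nat \<Rightarrow> nat \<Rightarrow> nat set \<Rightarrow> nat set \<Rightarrow> bool" where
  "shape_stats Zeros k l B T \<longleftrightarrow> k = 0 \<and> l = 0 \<and> B = {} \<and> T = {}"
| "shape_stats Rise k l B T \<longleftrightarrow> 1 \<le> k \<and> l = k \<and> B = {} \<and> T = {}"
| "shape_stats Plateau k l B T \<longleftrightarrow> 1 \<le> k \<and> l = k \<and> B = {} \<and> T = {k}"
| "shape_stats Fall k l B T \<longleftrightarrow> 1 \<le> k \<and> l = k - 1 \<and>
     k \<in> B \<and> k - 1 \<notin> B \<and> B \<subseteq> {1, k} \<and> T \<noteq> {} \<and> T \<subseteq> {k - 1, k}"
| "shape_stats Dip k l B T \<longleftrightarrow> k = 1 \<and> l = 0 \<and> B = {1} \<and> T = {}"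
| "shape_stats DipRise k l B T \<longleftrightarrow> 2 \<le> k \<and> l = k \<and> B = {1} \<and> T = {}"
| "shape_stats DipPlateau k l B T \<longleftrightarrow> 2 \<le> k \<and> l = k \<and> B = {1} \<and> T = {k}"

definition has_shape :: "shape \<Rightarrow> nat \<Rightarrow> nat list \<Rightarrow> bool" where
  "has_shape K k x \<longleftrightarrow> avoider x \<and> staircase k x \<and>
     shape_stats K k (last x) (closers_0101 x) (doubled_tops x)"

fun transitions :: "shape \<Rightarrow> nat \<Rightarrow> (nat \<times> shape \<times> nat) list" where
  "transitions Zeros k = [(0, Zeros, 0), (1, Rise, 1)]"
| "transitions Rise k =
     [(k - 1, if k = 1 then Dip else Fall, k), (k, Plateau, k), (k + 1, Rise, k + 1)]"
| "transitions Plateau k = [(k - 1, Fall, k), (k, Plateau, k)]"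
| "transitions Fall k = [(k - 1, Fall, k)]"
| "transitions Dip k = [(0, Dip, 1), (2, DipRise, 2)]"
| "transitions DipRise k =
     (if 3 \<le> k then [(k - 1, Fall, k)] else []) @ [(k, DipPlateau, k), (k + 1, DipRise, k + 1)]"
| "transitions DipPlateau k =
     (if 3 \<le> k then [(k - 1, Fall, k)] else []) @ [(k, DipPlateau, k)]"

lemma shape_stats_allowed_letters:
  assumes "shape_stats K k l B T"
  shows "k \<le> Suc v \<and> v \<le> Suc k \<and> v \<notin> B \<and> (\<forall>c\<in>T. v \<le> c) \<longleftrightarrow>
    v \<in> fst ` set (transitions K k)"
proof (cases K)
  case Fall
  then obtain c where c: "c \<in> T" "c \<le> k"
    using assms by fastforce
  show ?thesis
  proof
    assume allowed: "k \<le> Suc v \<and> v \<le> Suc k \<and> v \<notin> B \<and> (\<forall>c\<in>T. v \<le> c)"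
    then have "v \<le> c" "v \<noteq> k"
      using c assms Fall by auto
    with allowed c have "v = k - 1"
      by arith
    then show "v \<in> fst ` set (transitions K k)"
      using Fall by simp
  next
    assume "v \<in> fst ` set (transitions K k)"
    then show "k \<le> Suc v \<and> v \<le> Suc k \<and> v \<notin> B \<and> (\<forall>c\<in>T. v \<le> c)"
      using assms Fall by auto
  qed
qed (use assms in \<open>(clarsimp simp: image_iff; presburger)+\<close>)

lemma shape_stats_transition:
  assumes "shape_stats K k l B T" "(v, K', k') \<in> set (transitions K k)"
  shows "shape_stats K' k' v (B \<union> {v<..k}) (T \<union> {v} \<inter> {1..k})"
  using assms by (cases K; auto split: if_splits; arith)

lemma transition_letter_cases:
  assumes "shape_stats K k l B T" "(v, K', k') \<in> set (transitions K k)"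
  shows "(v = Suc k \<and> k' = Suc k) \<or> (v \<le> l \<and> k' = k)"
  using assms by (cases K) (auto split: if_splits)

lemma distinct_transition_letters:
  "shape_stats K k l B T \<Longrightarrow> distinct (map fst (transitions K k))"
  by (cases K) auto

lemma avoider_snoc_iff_transition:
  assumes "has_shape K k x"
  shows "avoider (x @ [v]) \<longleftrightarrow> v \<in> fst ` set (transitions K k)"
proof -
  from assms have "avoider x" and stair: "staircase k x"
    and stats: "shape_stats K k (last x) (closers_0101 x) (doubled_tops x)"
    by (simp_all add: has_shape_def)
  then show ?thesis
    using staircase_avoider_snoc[OF stair, of v] shape_stats_allowed_letters[OF stats, of v] by simp
qed

lemma has_shape_snoc:
  assumes shape: "has_shape K k x" and trans: "(v, K', k') \<in> set (transitions K k)"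
  shows "has_shape K' k' (x @ [v])"
proof -
  from shape have stair: "staircase k x"
    and stats: "shape_stats K k (last x) (closers_0101 x) (doubled_tops x)"
    by (simp_all add: has_shape_def)
  have "avoider (x @ [v])"
    using avoider_snoc_iff_transition[OF shape] trans by force
  moreover have "staircase k' (x @ [v])"
    using transition_letter_cases[OF stats trans] staircase_snoc_Suc[OF stair]
      staircase_snoc_le[OF stair]
    by auto
  moreover have "shape_stats K' k' (last (x @ [v])) (closers_0101 (x @ [v])) (doubled_tops (x @ [v]))"
    using shape_stats_transition[OF stats trans]
    by (simp add: staircase_closers_0101_snoc[OF stair] staircase_doubled_tops_snoc[OF stair])
  ultimately show ?thesis
    by (simp add: has_shape_def)
qed

lemma has_shape_Zeros_0: "has_shape Zeros 0 [0]"
proof -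
  have short: "\<not> subseq s [0]" if "length s \<ge> 2" for s :: "nat list"
    using that list_emb_length by fastforce
  have "\<not> contains_pat [0] p" if "length p = 4" for p
    using that short by (auto simp: contains_pat_iff_subseq red_def)
  with short have "avoider [0]" "asc_pairs [0] = {}" "closers_0101 [0] = {}"
      "doubled_tops [0] = {}" "closers_0120 [0] = {}"
    by (auto simp: avoider_def avoids_def is_ascent_seq_def asc_pairs_def closers_0101_def
        doubled_tops_def closers_0120_def)
  then show ?thesis
    by (simp add: has_shape_def staircase_def asc_def)
qed

fun num_completions :: "shape \<Rightarrow> nat \<Rightarrow> nat \<Rightarrow> nat" where
  "num_completions K k 0 = 1"
| "num_completions K k (Suc m) = (\<Sum>(v, K', k') \<leftarrow> transitions K k. num_completions K' k' m)"

definition completions :: "nat list \<Rightarrow> nat \<Rightarrow> nat list set" where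
  "completions x m = {ys. length ys = m \<and> avoider (x @ ys)}"

lemma avoider_appendD: "avoider (x @ ys) \<Longrightarrow> x \<noteq> [] \<Longrightarrow> avoider x"
proof (induction ys rule: rev_induct)
  case (snoc y ys)
  then show ?case
    using avoider_snoc[of "x @ ys" y] by simp
qed simp

lemma completions_Suc:
  assumes "has_shape K k x"
  shows "completions x (Suc m) =
    (\<Union>(v, K', k') \<in> set (transitions K k). (#) v ` completions (x @ [v]) m)"
proof (intro set_eqI iffI)
  fix ys
  assume "ys \<in> completions x (Suc m)"
  then obtain v ys' where ys: "ys = v # ys'" "length ys' = m" "avoider ((x @ [v]) @ ys')"
    by (auto simp: completions_def length_Suc_conv)
  then have "avoider (x @ [v])"
    by (blast dest: avoider_appendD)
  then obtain K' k' where "(v, K', k') \<in> set (transitions K k)"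
    using avoider_snoc_iff_transition[OF assms] by force
  moreover have "ys' \<in> completions (x @ [v]) m"
    using ys by (simp add: completions_def)
  ultimately show "ys \<in> (\<Union>(v, K', k') \<in> set (transitions K k). (#) v ` completions (x @ [v]) m)"
    using ys(1) by blast
qed (auto simp: completions_def)

lemma card_completions:
  assumes "has_shape K k x"
  shows "finite (completions x m) \<and> card (completions x m) = num_completions K k m"
  using assms
proof (induction m arbitrary: K k x)
  case 0
  then have "completions x 0 = {[]}"
    by (auto simp: completions_def has_shape_def)
  then show ?case
    by simp
next
  case (Suc m)
  let ?L = "transitions K k"
  let ?C = "\<lambda>(v, K', k'). (#) v ` completions (x @ [v]) m"
  have IH: "finite (?C t) \<and> card (?C t) = (\<lambda>(v, K', k'). num_completions K' k' m) t"
    if "t \<in> set ?L" for t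
  proof -
    obtain v K' k' where t: "t = (v, K', k')"
      using prod_cases3 by blast
    show ?thesis
      using that Suc.IH[OF has_shape_snoc[OF Suc.prems]] by (auto simp: t card_image)
  qed
  have "distinct (map fst ?L)"
    using Suc.prems distinct_transition_letters by (auto simp: has_shape_def)
  then have "distinct ?L" "inj_on fst (set ?L)"
    by (simp_all add: distinct_map)
  have disjoint: "?C s \<inter> ?C t = {}" if "s \<in> set ?L" "t \<in> set ?L" "s \<noteq> t" for s t
  proof -
    have "fst s \<noteq> fst t"
      using that \<open>inj_on fst (set ?L)\<close> by (meson inj_on_eq_iff)
    then show ?thesis
      by (auto split: prod.splits)
  qed
  have "card (completions x (Suc m)) = (\<Sum>t \<in> set ?L. card (?C t))"
    unfolding completions_Suc[OF Suc.prems]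
    by (rule card_UN_disjoint) (use IH disjoint in auto)
  also have "\<dots> = num_completions K k (Suc m)"
    using IH \<open>distinct ?L\<close> by (simp add: sum_list_distinct_conv_sum_set)
  finally show ?case
    using IH by (simp add: completions_Suc[OF Suc.prems])
qed

lemma a_P_eq_card_avoiders:
  "a_P {[0,1,0,1], [0,1,1,2], [0,1,2,0]} n = card {x. avoider x \<and> length x = n}"
  unfolding a_P_def avoider_def by (rule arg_cong[where f = card]) auto

lemma a_P_eq_num_completions:
  assumes "n \<ge> 1"
  shows "a_P {[0,1,0,1], [0,1,1,2], [0,1,2,0]} n = num_completions Zeros 0 (n - 1)"
proof -
  have "{x. avoider x \<and> length x = n} = (#) 0 ` completions [0] (n - 1)"
  proof (intro set_eqI iffI)
    fix x
    assume x: "x \<in> {x. avoider x \<and> length x = n}"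
    then have x_Cons: "x = 0 # tl x"
      by (cases x) (auto simp: avoider_def is_ascent_seq_def)
    with x have "tl x \<in> completions [0] (n - 1)"
      unfolding completions_def
      by (metis (mono_tags) append_Cons append_Nil length_tl mem_Collect_eq)
    with x_Cons show "x \<in> (#) 0 ` completions [0] (n - 1)"
      by (rule image_eqI)
  next
    fix x
    assume "x \<in> (#) 0 ` completions [0] (n - 1)"
    then obtain ys where "x = 0 # ys" "length ys = n - 1" "avoider ([0] @ ys)"
      by (auto simp: completions_def)
    then show "x \<in> {x. avoider x \<and> length x = n}"
      using assms by simp
  qed
  then show ?thesis
    unfolding a_P_eq_card_avoiders using card_completions[OF has_shape_Zeros_0]
    by (simp add: card_image)
qed

lemma num_completions_Fall: "num_completions Fall k m = 1"
  by (induction m) auto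

lemma num_completions_Plateau: "num_completions Plateau k m = m + 1"
  by (induction m) (auto simp: num_completions_Fall)

lemma num_completions_DipPlateau:
  "num_completions DipPlateau k m = (if 3 \<le> k then m + 1 else 1)"
  by (induction m) (auto simp: num_completions_Fall)

lemma num_completions_Rise: "2 \<le> k \<Longrightarrow> 2 * num_completions Rise k m = (m + 1) * (m + 2)"
proof (induction m arbitrary: k)
  case (Suc m)
  then show ?case
    using Suc.IH[of "k + 1"]
    by (simp add: num_completions_Fall num_completions_Plateau algebra_simps)
qed simp

lemma num_completions_DipRise:
  "3 \<le> k \<Longrightarrow> 2 * num_completions DipRise k m = (m + 1) * (m + 2)"
proof (induction m arbitrary: k)
  case (Suc m)
  then show ?case
    using Suc.IH[of "k + 1"]
    by (simp add: num_completions_Fall num_completions_DipPlateau algebra_simps)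
qed simp

lemma num_completions_DipRise_2: "2 * num_completions DipRise 2 m = m * (m + 1) + 2"
proof (cases m)
  case (Suc j)
  then show ?thesis
    using num_completions_DipRise[of 3 j]
    by (simp add: num_completions_DipPlateau numeral_eq_Suc algebra_simps)
qed simp

lemma num_completions_Dip: "6 * num_completions Dip k m = m ^ 3 + 5 * m + 6"
proof (induction m arbitrary: k)
  case (Suc m)
  have "6 * num_completions Dip k (Suc m) =
      6 * num_completions Dip 1 m + 3 * (2 * num_completions DipRise 2 m)"
    by simp
  also have "\<dots> = Suc m ^ 3 + 5 * Suc m + 6"
    unfolding Suc.IH num_completions_DipRise_2 by (simp add: algebra_simps power3_eq_cube)
  finally show ?case .
qed simp

lemma num_completions_Rise_1:
  "6 * num_completions Rise 1 (Suc m) = m ^ 3 + 3 * m ^ 2 + 20 * m + 18"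
proof -
  have "6 * num_completions Rise 1 (Suc m) =
      6 * num_completions Dip 1 m + 6 * num_completions Plateau 1 m +
      3 * (2 * num_completions Rise 2 m)"
    by (simp add: numeral_2_eq_2 algebra_simps)
  then show ?thesis
    unfolding num_completions_Dip num_completions_Plateau num_completions_Rise[OF order_refl]
    by (simp add: algebra_simps power2_eq_square power3_eq_cube)
qed

lemma num_completions_Zeros:
  "24 * real (num_completions Zeros 0 (Suc m)) =
    (real m + 2) ^ 4 - 6 * (real m + 2) ^ 3 + 47 * (real m + 2) ^ 2 - 114 * (real m + 2) + 120"
proof (induction m)
  case 0
  show ?case
    by (simp add: numeral_eq_Suc)
next
  case (Suc m)
  have rise: "6 * real (num_completions Rise 1 (Suc m)) =
      real m ^ 3 + 3 * real m ^ 2 + 20 * real m + 18"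
    using arg_cong[OF num_completions_Rise_1[of m], of real] by simp
  have "24 * real (num_completions Zeros 0 (Suc (Suc m))) =
      24 * real (num_completions Zeros 0 (Suc m)) + 4 * (6 * real (num_completions Rise 1 (Suc m)))"
    by simp
  also have "\<dots> = (real m + 2) ^ 4 - 6 * (real m + 2) ^ 3 + 47 * (real m + 2) ^ 2 -
      114 * (real m + 2) + 120 + 4 * (real m ^ 3 + 3 * real m ^ 2 + 20 * real m + 18)"
    unfolding Suc.IH rise ..
  also have "\<dots> = (real (Suc m) + 2) ^ 4 - 6 * (real (Suc m) + 2) ^ 3 +
      47 * (real (Suc m) + 2) ^ 2 - 114 * (real (Suc m) + 2) + 120"
    by (simp add: algebra_simps power2_eq_square power3_eq_cube power4_eq_xxxx)
  finally show ?case .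
qed

theorem theorem4p1:
  shows "a_P {[0,1,0,1], [0,1,1,2], [0,1,2,0]} 1 = 1 \<and>
    (\<forall>n::nat. n \<ge> 2 \<longrightarrow>
      real (a_P {[0,1,0,1], [0,1,1,2], [0,1,2,0]} n) =
        (real n ^ 4 - 6 * real n ^ 3 + 47 * real n ^ 2 - 114 * real n + 120) / 24)"
proof (intro conjI allI impI)
  show "a_P {[0,1,0,1], [0,1,1,2], [0,1,2,0]} 1 = 1"
    using a_P_eq_num_completions[of 1] by simp
next
  fix n :: nat
  assume "n \<ge> 2"
  define m where "m = n - 2"
  with \<open>n \<ge> 2\<close> have n: "n = m + 2"
    by simp
  then have count: "a_P {[0,1,0,1], [0,1,1,2], [0,1,2,0]} n = num_completions Zeros 0 (Suc m)"
    using a_P_eq_num_completions[of n] by simp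
  have real_n: "real n = real m + 2"
    using n by simp
  show "real (a_P {[0,1,0,1], [0,1,1,2], [0,1,2,0]} n) =
      (real n ^ 4 - 6 * real n ^ 3 + 47 * real n ^ 2 - 114 * real n + 120) / 24"
    unfolding count real_n using num_completions_Zeros[of m] by (simp add: eq_divide_eq)
qed

end
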